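(* Let $c_0,c_1,c_2,c_3$ be numbers, not all zero, let $\{V_n\}_{n\in\mathbb Z}$ be the generalized Tetranacci sequence with $V_j=c_j$ ($j=0,1,2,3$), and let $GV_n=V_n+iV_{n-1}$ for all integers $n$ (the Gaussian generalized Tetranacci numbers). Let $\alpha,\beta,\gamma,\delta$ be the four roots of $x^4-x^3-x^2-x-1=0$ and set, for $r\in\{\alpha,\beta,\gamma,\delta\}$, $$K_r=\frac{r-1}{5r-8}\bigl(V_3r^3+(V_0+V_1+V_2)r^2+(V_1+V_2)r+V_2\bigr),$$ and $A=K_\alpha$, $B=K_\beta$, $C=K_\gamma$, $D=K_\delta$. Then for every integer $n$, $$GV_n=\left(A\alpha^{n-6}+B\beta^{n-6}+C\gamma^{n-6}+D\delta^{n-6}\right)+i\left(A\alpha^{n-7}+B\beta^{n-7}+C\gamma^{n-7}+D\delta^{n-7}\right).$$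
   Context: The generalized Tetranacci sequence is defined by $V_n=V_{n-1}+V_{n-2}+V_{n-3}+V_{n-4}$ with initial values $V_0,V_1,V_2,V_3$, and is extended to negative indices by $V_{n-4}=V_n-V_{n-1}-V_{n-2}-V_{n-3}$, so the recurrence holds for all integers $n$. Equivalently, $GV_n$ satisfies the same recurrence with $GV_0=c_0+i(c_3-c_2-c_1-c_0)$, $GV_1=c_1+ic_0$, $GV_2=c_2+ic_1$, $GV_3=c_3+ic_2$. *)

theory Defs
  imports Complex_Main
begin

definition is_gen_tetranacci :: "(int \<Rightarrow> real) \<Rightarrow> real \<Rightarrow> real \<Rightarrow> real \<Rightarrow> real \<Rightarrow> bool" where
  "is_gen_tetranacci V c0 c1 c2 c3 \<longleftrightarrow>
     V 0 = c0 \<and> V 1 = c1 \<and> V 2 = c2 \<and> V 3 = c3 \<and>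
     (\<forall>n::int. V n = V (n-1) + V (n-2) + V (n-3) + V (n-4))"

definition GV :: "(int \<Rightarrow> real) \<Rightarrow> int \<Rightarrow> complex" where
  "GV V n = complex_of_real (V n) + \<i> * complex_of_real (V (n-1))"

definition Kcoef :: "(int \<Rightarrow> real) \<Rightarrow> complex \<Rightarrow> complex" where
  "Kcoef V r = (r - 1) / (5*r - 8) *
     (of_real (V 3) * r^3 + of_real (V 0 + V 1 + V 2) * r^2 + of_real (V 1 + V 2) * r + of_real (V 2))"

end

theory Submission
  imports Defs
begin

text \<open>Both sides of the Binet formula solve the Tetranacci recurrence, the right-hand side
because every root satisfies \<open>r^4 = r^3 + r^2 + r + 1\<close>; so it suffices to compare four
consecutive values, \<open>n = 6, \<dots>, 9\<close>. Modulo the characteristic polynomial, \<open>563 K\<^sub>r\<close> is a cubic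
in \<open>r\<close> whose coefficients are linear in \<open>V\<^sub>0, \<dots>, V\<^sub>3\<close>, so those four values only involve the
power sums \<open>\<Sum> r^j\<close> for \<open>j \<le> 6\<close>: the first four, \<open>4, 1, 3, 7\<close>, follow from Vieta's formulas, and
the others from the recurrence, which the power sums solve as well.\<close>

definition tetranacci_recurrence :: "(int \<Rightarrow> 'a::ab_group_add) \<Rightarrow> bool" where
  "tetranacci_recurrence f \<longleftrightarrow> (\<forall>n. f n = f (n-1) + f (n-2) + f (n-3) + f (n-4))"

lemma tetranacci_recurrenceD:
  "tetranacci_recurrence f \<Longrightarrow> f n = f (n-1) + f (n-2) + f (n-3) + f (n-4)"
  unfolding tetranacci_recurrence_def by blast

lemma tetranacci_recurrenceI:
  "(\<And>n. f n = f (n-1) + f (n-2) + f (n-3) + f (n-4)) \<Longrightarrow> tetranacci_recurrence f"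
  unfolding tetranacci_recurrence_def by blast

lemma tetranacci_recurrence_add:
  assumes "tetranacci_recurrence f" "tetranacci_recurrence g"
  shows "tetranacci_recurrence (\<lambda>n. f n + g n)"
proof (rule tetranacci_recurrenceI)
  fix n
  show "f n + g n = f (n-1) + g (n-1) + (f (n-2) + g (n-2)) + (f (n-3) + g (n-3)) + (f (n-4) + g (n-4))"
    using assms[THEN tetranacci_recurrenceD, of n] by (simp add: algebra_simps)
qed

lemma tetranacci_recurrence_cmult:
  fixes f :: "int \<Rightarrow> 'a::ring"
  assumes "tetranacci_recurrence f"
  shows "tetranacci_recurrence (\<lambda>n. c * f n)"
proof (rule tetranacci_recurrenceI)
  fix n
  show "c * f n = c * f (n-1) + c * f (n-2) + c * f (n-3) + c * f (n-4)"
    using tetranacci_recurrenceD[OF assms, of n] by (simp add: algebra_simps)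
qed

lemma tetranacci_recurrence_shift:
  assumes "tetranacci_recurrence f"
  shows "tetranacci_recurrence (\<lambda>n. f (n - k))"
proof (rule tetranacci_recurrenceI)
  fix n
  show "f (n - k) = f (n-1 - k) + f (n-2 - k) + f (n-3 - k) + f (n-4 - k)"
    using tetranacci_recurrenceD[OF assms, of "n - k"] by (simp add: diff_right_commute[of _ k])
qed

lemma tetranacci_recurrence_of_real:
  assumes "tetranacci_recurrence f"
  shows "tetranacci_recurrence (\<lambda>n. of_real (f n) :: 'a::real_algebra_1)"
proof (rule tetranacci_recurrenceI)
  fix n
  show "(of_real (f n) :: 'a) = of_real (f (n-1)) + of_real (f (n-2)) + of_real (f (n-3)) + of_real (f (n-4))"
    using tetranacci_recurrenceD[OF assms, of n] by (simp only: of_real_add[symmetric])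
qed

lemma tetranacci_recurrence_power_int:
  fixes r :: "'a::field"
  assumes "r^4 = r^3 + r^2 + r + 1"
  shows "tetranacci_recurrence (\<lambda>n. r powi n)"
proof (rule tetranacci_recurrenceI)
  fix n :: int
  have "r \<noteq> 0" using assms by auto
  then have shift: "r powi (n - 4 + int j) = r powi (n - 4) * r ^ j" for j
    by (simp add: power_int_add)
  have "r powi n = r powi (n - 4) * r ^ 4" using shift[of 4] by simp
  also have "\<dots> = r powi (n-4) * r^3 + r powi (n-4) * r^2 + r powi (n-4) * r + r powi (n-4)"
    using assms by (simp add: algebra_simps)
  also have "\<dots> = r powi (n-1) + r powi (n-2) + r powi (n-3) + r powi (n-4)"
    using shift[of 3] shift[of 2] shift[of 1] by simp
  finally show "r powi n = r powi (n-1) + r powi (n-2) + r powi (n-3) + r powi (n-4)" .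
qed

lemma tetranacci_recurrence_unique:
  assumes f: "tetranacci_recurrence f" and g: "tetranacci_recurrence g"
    and init: "f k = g k" "f (k+1) = g (k+1)" "f (k+2) = g (k+2)" "f (k+3) = g (k+3)"
  shows "f n = g n"
proof (induction n rule: measure_induct_rule[where f = "\<lambda>n. nat \<bar>2*n - 2*k - 3\<bar>"])
  \<comment> \<open>Induction on the distance from the centre \<open>k + 3/2\<close> of the initial window: the
    recurrence, read forwards or backwards, expresses \<open>f n\<close> by four values closer to it.\<close>
  case (less n)
  consider "n < k" | "k \<le> n \<and> n \<le> k + 3" | "k + 3 < n" by linarith
  then show ?case
  proof cases
    case 1
    then have "f (n+i) = g (n+i)" if "1 \<le> i" "i \<le> 4" for i
      using that by (intro less) auto
    moreover have "f n = f (n+4) - f (n+3) - f (n+2) - f (n+1)"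
      using tetranacci_recurrenceD[OF f, of "n+4"] by (simp add: algebra_simps)
    moreover have "g n = g (n+4) - g (n+3) - g (n+2) - g (n+1)"
      using tetranacci_recurrenceD[OF g, of "n+4"] by (simp add: algebra_simps)
    ultimately show ?thesis by simp
  next
    case 2
    then have "n = k \<or> n = k+1 \<or> n = k+2 \<or> n = k+3" by linarith
    then show ?thesis using init by auto
  next
    case 3
    then have "f (n-i) = g (n-i)" if "1 \<le> i" "i \<le> 4" for i
      using that by (intro less) auto
    then show ?thesis
      using tetranacci_recurrenceD[OF f, of n] tetranacci_recurrenceD[OF g, of n] by simp
  qed
qed

lemma cubic_mult_power_int:
  fixes r :: "'a::field"
  assumes "r \<noteq> 0"
  shows "(a0 + a1 * r + a2 * r^2 + a3 * r^3) * r powi m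
    = a0 * r powi m + a1 * r powi (m+1) + a2 * r powi (m+2) + a3 * r powi (m+3)"
proof -
  have "r powi (m + int j) = r powi m * r^j" for j
    using assms by (simp add: power_int_add)
  from this[of 1] this[of 2] this[of 3] show ?thesis
    by (simp add: algebra_simps)
qed

lemma tetranacci_power_sums:
  fixes a b c d :: complex
  assumes "\<forall>x. x^4 - x^3 - x^2 - x - 1 = (x - a) * (x - b) * (x - c) * (x - d)"
  shows "a + b + c + d = 1" "a^2 + b^2 + c^2 + d^2 = 3" "a^3 + b^3 + c^3 + d^3 = 7"
proof -
  have "-1 = a * b * c * d" using assms[THEN spec, of 0] by simp
  moreover have "-3 = (1 - a) * (1 - b) * (1 - c) * (1 - d)" using assms[THEN spec, of 1] by simp
  moreover have "1 = (-1 - a) * (-1 - b) * (-1 - c) * (-1 - d)" using assms[THEN spec, of "-1"] by simp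
  moreover have "1 = (2 - a) * (2 - b) * (2 - c) * (2 - d)" using assms[THEN spec, of 2] by simp
  ultimately show "a + b + c + d = 1" "a^2 + b^2 + c^2 + d^2 = 3" "a^3 + b^3 + c^3 + d^3 = 7"
    by algebra+
qed

lemma tetranacci_recurrence_values_6_to_9:
  fixes v :: "int \<Rightarrow> 'a::comm_ring_1"
  assumes "tetranacci_recurrence v"
  shows "v 6 = 2 * v 0 + 3 * v 1 + 4 * v 2 + 4 * v 3"
    and "v 7 = 4 * v 0 + 6 * v 1 + 7 * v 2 + 8 * v 3"
    and "v 8 = 8 * v 0 + 12 * v 1 + 14 * v 2 + 15 * v 3"
    and "v 9 = 15 * v 0 + 23 * v 1 + 27 * v 2 + 29 * v 3"
  using tetranacci_recurrenceD[OF assms, of 4] tetranacci_recurrenceD[OF assms, of 5]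
    tetranacci_recurrenceD[OF assms, of 6] tetranacci_recurrenceD[OF assms, of 7]
    tetranacci_recurrenceD[OF assms, of 8] tetranacci_recurrenceD[OF assms, of 9]
  by (simp_all add: algebra_simps)

text \<open>The denominator 563 comes from the value \<open>-1689/625 = -3 \<cdot> 563/5^4\<close> of the characteristic
polynomial at the zero \<open>8/5\<close> of \<open>5r - 8\<close>.\<close>

lemma Kcoef_tetranacci_root:
  fixes r :: complex
  assumes root: "r^4 = r^3 + r^2 + r + 1"
  shows "563 * Kcoef V r = of_real (40 * V 0 + 65 * V 1 + 151 * V 2 + 64 * V 3)
    + of_real (65 * V 0 + 176 * V 1 + 175 * V 2 + 104 * V 3) * r
    + of_real (151 * V 0 + 175 * V 1 + 190 * V 2 + 129 * V 3) * r^2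
    + of_real (64 * V 0 + 104 * V 1 + 129 * V 2 + 215 * V 3) * r^3"
proof -
  have "5*r - 8 \<noteq> 0"
  proof
    assume "5*r - 8 = 0"
    then have "r = 8/5" by (simp add: field_simps)
    with root show False by (simp add: power_divide)
  qed
  with root show ?thesis
    unfolding Kcoef_def by (simp add: field_simps) algebra
qed

lemma tetranacci_binet:
  fixes V :: "int \<Rightarrow> real" and \<alpha> \<beta> \<gamma> \<delta> :: complex
  assumes V: "tetranacci_recurrence V"
    and roots: "\<forall>x. x^4 - x^3 - x^2 - x - 1 = (x - \<alpha>) * (x - \<beta>) * (x - \<gamma>) * (x - \<delta>)"
  shows "of_real (V n) = Kcoef V \<alpha> * \<alpha> powi (n-6) + Kcoef V \<beta> * \<beta> powi (n-6)
    + Kcoef V \<gamma> * \<gamma> powi (n-6) + Kcoef V \<delta> * \<delta> powi (n-6)"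
proof -
  define s where "s n = \<alpha> powi n + \<beta> powi n + \<gamma> powi n + \<delta> powi n" for n
  define k0 where "k0 = complex_of_real (40 * V 0 + 65 * V 1 + 151 * V 2 + 64 * V 3)"
  define k1 where "k1 = complex_of_real (65 * V 0 + 176 * V 1 + 175 * V 2 + 104 * V 3)"
  define k2 where "k2 = complex_of_real (151 * V 0 + 175 * V 1 + 190 * V 2 + 129 * V 3)"
  define k3 where "k3 = complex_of_real (64 * V 0 + 104 * V 1 + 129 * V 2 + 215 * V 3)"
  define L where "L n = k0 * s (n-6) + k1 * s (n-5) + k2 * s (n-4) + k3 * s (n-3)" for n
  have root: "r^4 = r^3 + r^2 + r + 1" if "r \<in> {\<alpha>, \<beta>, \<gamma>, \<delta>}" for r
    using roots[THEN spec, of r] that by (auto simp: algebra_simps)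
  have root_term: "563 * (Kcoef V r * r powi (n-6))
      = k0 * r powi (n-6) + k1 * r powi (n-5) + k2 * r powi (n-4) + k3 * r powi (n-3)"
    if "r \<in> {\<alpha>, \<beta>, \<gamma>, \<delta>}" for r
  proof -
    have "r \<noteq> 0" using root[OF that] by auto
    have "563 * (Kcoef V r * r powi (n-6)) = (k0 + k1 * r + k2 * r^2 + k3 * r^3) * r powi (n-6)"
      unfolding mult.assoc[symmetric] Kcoef_tetranacci_root[OF root[OF that]]
        k0_def k1_def k2_def k3_def ..
    also have "\<dots> = k0 * r powi (n-6) + k1 * r powi (n-6+1) + k2 * r powi (n-6+2)
        + k3 * r powi (n-6+3)"
      using \<open>r \<noteq> 0\<close> by (rule cubic_mult_power_int)
    finally show ?thesis by simp
  qed
  have s_rec: "tetranacci_recurrence s"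
    unfolding s_def using root
    by (intro tetranacci_recurrence_add tetranacci_recurrence_power_int) auto
  have "s 0 = 4" "s 1 = 1" "s 2 = 3" "s 3 = 7"
    using tetranacci_power_sums[OF roots] by (simp_all add: s_def)
  then have s_values: "s 0 = 4" "s 1 = 1" "s 2 = 3" "s 3 = 7" "s 4 = 15" "s 5 = 26" "s 6 = 51"
    using tetranacci_recurrenceD[OF s_rec, of 4] tetranacci_recurrenceD[OF s_rec, of 5]
      tetranacci_recurrenceD[OF s_rec, of 6] by simp_all
  have L_rec: "tetranacci_recurrence L"
    unfolding L_def using s_rec
    by (intro tetranacci_recurrence_add tetranacci_recurrence_cmult tetranacci_recurrence_shift)
  have scaled_V_rec: "tetranacci_recurrence (\<lambda>n. 563 * complex_of_real (V n))"
    using V by (intro tetranacci_recurrence_cmult tetranacci_recurrence_of_real)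
  have "L j = 563 * complex_of_real (V j)" if "j \<in> {6, 7, 8, 9}" for j
    using that tetranacci_recurrence_values_6_to_9[OF V]
    by (auto simp: L_def k0_def k1_def k2_def k3_def s_values algebra_simps)
  then have "L n = 563 * complex_of_real (V n)"
    using tetranacci_recurrence_unique[OF L_rec scaled_V_rec, of 6] by simp
  moreover have "563 * (Kcoef V \<alpha> * \<alpha> powi (n-6) + Kcoef V \<beta> * \<beta> powi (n-6)
    + Kcoef V \<gamma> * \<gamma> powi (n-6) + Kcoef V \<delta> * \<delta> powi (n-6)) = L n"
    using root_term[of \<alpha>] root_term[of \<beta>] root_term[of \<gamma>] root_term[of \<delta>]
    by (simp add: L_def s_def algebra_simps)
  ultimately show ?thesis
    by (simp only: mult_left_cancel[OF zero_neq_numeral[symmetric]] eq_commute)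
qed

theorem mainTheorem2:
  fixes c0 c1 c2 c3 :: real and V :: "int \<Rightarrow> real" and \<alpha> \<beta> \<gamma> \<delta> :: complex
  assumes "\<not> (c0 = 0 \<and> c1 = 0 \<and> c2 = 0 \<and> c3 = 0)"
    and "is_gen_tetranacci V c0 c1 c2 c3"
    and "\<forall>x::complex. x^4 - x^3 - x^2 - x - 1 = (x - \<alpha>) * (x - \<beta>) * (x - \<gamma>) * (x - \<delta>)"
  shows "\<forall>n::int. GV V n =
     (Kcoef V \<alpha> * \<alpha> powi (n-6) + Kcoef V \<beta> * \<beta> powi (n-6) + Kcoef V \<gamma> * \<gamma> powi (n-6) + Kcoef V \<delta> * \<delta> powi (n-6))
     + \<i> * (Kcoef V \<alpha> * \<alpha> powi (n-7) + Kcoef V \<beta> * \<beta> powi (n-7) + Kcoef V \<gamma> * \<gamma> powi (n-7) + Kcoef V \<delta> * \<delta> powi (n-7))"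
proof
  fix n :: int
  have "tetranacci_recurrence V"
    using assms(2) unfolding is_gen_tetranacci_def by (intro tetranacci_recurrenceI) blast
  note binet = tetranacci_binet[OF this assms(3)]
  show "GV V n =
     (Kcoef V \<alpha> * \<alpha> powi (n-6) + Kcoef V \<beta> * \<beta> powi (n-6) + Kcoef V \<gamma> * \<gamma> powi (n-6) + Kcoef V \<delta> * \<delta> powi (n-6))
     + \<i> * (Kcoef V \<alpha> * \<alpha> powi (n-7) + Kcoef V \<beta> * \<beta> powi (n-7) + Kcoef V \<gamma> * \<gamma> powi (n-7) + Kcoef V \<delta> * \<delta> powi (n-7))"
    unfolding GV_def binet[of n] binet[of "n-1"] by simp
qed

end
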